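(* In the bootstrap setting, let $|\alpha|+|\beta|+|\sigma|\le10$. For every $\eta>0$ there is $C_\eta>0$ (depending on $\eta,d_0,\gamma$) such that for every $T\in[0,T_{\mathrm{boot}})$, $$T^{\alpha,\beta,\sigma}_2\le\eta\big\|(1+t)^{-\frac12-\frac\delta2}W_{\alpha,\beta,\sigma}D^{\alpha,\beta,\sigma}g\big\|^2_{L^2([0,T];L^2_xL^2_v)}+C_\eta\sum_{\substack{|\beta'|\le|\beta|,\ |\sigma'|\le|\sigma|\\|\beta'|+|\sigma'|\le|\beta|+|\sigma|-1}}\big\|(1+t)^{-\frac12-\frac\delta2}W_{\alpha,\beta',\sigma'}D^{\alpha,\beta',\sigma'}g\big\|^2_{L^2([0,T];L^2_xL^2_v)},$$ where $$T^{\alpha,\beta,\sigma}_2:=\sum_{\substack{|\beta'|\le|\beta|,\ |\sigma'|\le|\sigma|\\|\beta'|+|\sigma'|\le|\beta|+|\sigma|-1}}\Big\|\frac{1}{(1+t)^{1+\delta}}W^2_{\alpha,\beta,\sigma}|D^{\alpha,\beta,\sigma}g|\,|D^{\alpha,\beta',\sigma'}g|\Big\|_{L^1([0,T];L^1_xL^1_v)}.$$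
   Context: Notation: $\langle z\rangle=\sqrt{1+|z|^2}$; repeated lower-case indices summed over $\{1,2,3\}$. Multi-indices $\alpha,\beta,\sigma\in(\mathbb N\cup\{0\})^3$ with $|\alpha|=\sum\alpha_l$; sums over primed multi-indices run over all multi-indices satisfying the displayed constraints. $D^{\alpha,\beta,\sigma}=\partial_x^\alpha\partial_v^\beta Y^\sigma$ with $Y^\sigma=\prod_lY_l^{\sigma_l}$, $Y_l=(t+1)\partial_{x_l}+\partial_{v_l}$. $\nu_{\alpha,\beta,\sigma}=20-\frac32(|\alpha|+|\sigma|)-\frac12|\beta|$, $\omega_{\alpha,\beta,\sigma}=20-\frac32|\sigma|-\frac12(|\alpha|+|\beta|)$, $W_{\alpha,\beta,\sigma}=\langle v\rangle^{\nu_{\alpha,\beta,\sigma}}\langle x-(t+1)v\rangle^{\omega_{\alpha,\beta,\sigma}}$. Mixed norms take $v$ first, then $x$, then $t$. Bootstrap setting: fix $\gamma\in[0,1)$, $d_0>0$, $\delta\in(0,\frac18)$; $a_{ij}(z)=(\delta_{ij}-z_iz_j/|z|^2)|z|^{\gamma+2}$, $c=\partial^2_{z_iz_j}a_{ij}$, $\bar a_{ij}=\int a_{ij}(v-v_* )f(t,x,v_* )dv_*$, $\bar c=\int c(v-v_* )f(t,x,v_* )dv_*$; Landau equation $\partial_tf+v_i\partial_{x_i}f=\bar a_{ij}\partial^2_{v_iv_j}f-\bar cf$; $d(t)=d_0(1+(1+t)^{-\delta})$. Energy norm for $T>0$: $\|h\|^2_{E_T}=\sum_{|\alpha|+|\beta|+|\sigma|\le10}(1+T)^{-|\beta|(1+\delta)}\big(\|W_{\alpha,\beta,\sigma}D^{\alpha,\beta,\sigma}h\|^2_{L^\infty([0,T);L^2_xL^2_v)}+\|\langle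 v\rangle^{1/2}W_{\alpha,\beta,\sigma}D^{\alpha,\beta,\sigma}h\|^2_{L^2([0,T);L^2_xL^2_v)}\big)$. $\epsilon_0=\epsilon_0(d_0,\gamma)>0$ is a fixed sufficiently small constant, $\epsilon\in[0,\epsilon_0]$, and $f_{\mathrm{ini}}$ satisfies $\sum_{|\alpha|+|\beta|+|\sigma|\le10}\|\langle v\rangle^{20-\frac32|\alpha|-\frac12|\beta|-\frac32|\sigma|}\langle x-v\rangle^{20-\frac32|\sigma|-\frac12|\beta|-\frac12|\alpha|}\partial_x^\alpha\partial_v^\beta(\partial_x+\partial_v)^\sigma(e^{2d_0\langle v\rangle}f_{\mathrm{ini}})\|^2_{L^2_xL^2_v}<\epsilon$. $T_{\mathrm{boot}}>0$ and $f:[0,T_{\mathrm{boot}})\times\mathbb R^3\times\mathbb R^3\to\mathbb R$ is a (sufficiently regular) solution of the Landau equation with $f\ge0$, $f(0)=f_{\mathrm{ini}}$; $g=e^{d(t)\langle v\rangle}f$; and $\|g\|_{E_T}\le\epsilon^{3/4}$ for all $T\in[0,T_{\mathrm{boot}})$. $A\lesssim B$ means $A\le CB$ with $C$ depending only on $d_0,\gamma$. *)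

theory Defs
  imports "HOL-Analysis.Analysis" "HOL-Probability.Essential_Supremum"
begin

type_synonym vec3 = "real ^ 3"
type_synonym mindex = "3 \<Rightarrow> nat"
type_synonym phase_fun = "vec3 \<Rightarrow> vec3 \<Rightarrow> real"  (* functions of (x,v) *)

definition jbr :: "vec3 \<Rightarrow> real" where
  "jbr z = sqrt (1 + (norm z)\<^sup>2)"

definition msize :: "mindex \<Rightarrow> nat" where
  "msize \<alpha> = (\<Sum>l\<in>UNIV. \<alpha> l)"

definition pd1 :: "3 \<Rightarrow> (vec3 \<Rightarrow> real) \<Rightarrow> vec3 \<Rightarrow> real" where
  "pd1 i F z = deriv (\<lambda>s. F (z + s *\<^sub>R axis i 1)) 0"

definition pdx :: "3 \<Rightarrow> phase_fun \<Rightarrow> phase_fun" where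
  "pdx i h x v = pd1 i (\<lambda>y. h y v) x"

definition pdv :: "3 \<Rightarrow> phase_fun \<Rightarrow> phase_fun" where
  "pdv i h x v = pd1 i (\<lambda>w. h x w) v"

definition Yop :: "real \<Rightarrow> 3 \<Rightarrow> phase_fun \<Rightarrow> phase_fun" where
  "Yop t i h x v = (t + 1) * pdx i h x v + pdv i h x v"

definition mpow :: "(3 \<Rightarrow> phase_fun \<Rightarrow> phase_fun) \<Rightarrow> mindex \<Rightarrow> phase_fun \<Rightarrow> phase_fun" where
  "mpow P \<alpha> h = (P 1 ^^ \<alpha> 1) ((P 2 ^^ \<alpha> 2) ((P 3 ^^ \<alpha> 3) h))"

definition Dop :: "real \<Rightarrow> mindex \<Rightarrow> mindex \<Rightarrow> mindex \<Rightarrow> phase_fun \<Rightarrow> phase_fun" where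
  "Dop t \<alpha> \<beta> \<sigma> h = mpow pdx \<alpha> (mpow pdv \<beta> (mpow (Yop t) \<sigma> h))"

definition nu_w :: "mindex \<Rightarrow> mindex \<Rightarrow> mindex \<Rightarrow> real" where
  "nu_w \<alpha> \<beta> \<sigma> = 20 - 3/2 * real (msize \<alpha> + msize \<sigma>) - 1/2 * real (msize \<beta>)"

definition omega_w :: "mindex \<Rightarrow> mindex \<Rightarrow> mindex \<Rightarrow> real" where
  "omega_w \<alpha> \<beta> \<sigma> = 20 - 3/2 * real (msize \<sigma>) - 1/2 * real (msize \<alpha> + msize \<beta>)"

definition Wt :: "real \<Rightarrow> mindex \<Rightarrow> mindex \<Rightarrow> mindex \<Rightarrow> vec3 \<Rightarrow> vec3 \<Rightarrow> real" where
  "Wt t \<alpha> \<beta> \<sigma> x v = jbr v powr nu_w \<alpha> \<beta> \<sigma> * jbr (x - (t + 1) *\<^sub>R v) powr omega_w \<alpha> \<beta> \<sigma>"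

definition L2sq :: "phase_fun \<Rightarrow> ennreal" where
  "L2sq h = (\<integral>\<^sup>+ x. (\<integral>\<^sup>+ v. ennreal ((h x v)\<^sup>2) \<partial>lborel) \<partial>lborel)"

definition ETsq :: "real \<Rightarrow> (real \<Rightarrow> phase_fun) \<Rightarrow> real \<Rightarrow> ennreal" where
  "ETsq \<delta> h T = (\<Sum>(\<alpha>,\<beta>,\<sigma>) \<in> {(\<alpha>,\<beta>,\<sigma>). msize \<alpha> + msize \<beta> + msize \<sigma> \<le> 10}.
     ennreal ((1 + T) powr (- (real (msize \<beta>) * (1 + \<delta>)))) *
     (esssup (restrict_space lborel {0..<T})
         (\<lambda>t. L2sq (\<lambda>x v. Wt t \<alpha> \<beta> \<sigma> x v * Dop t \<alpha> \<beta> \<sigma> (h t) x v))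
      + (\<integral>\<^sup>+ t\<in>{0..<T}.
           L2sq (\<lambda>x v. jbr v powr (1/2) * Wt t \<alpha> \<beta> \<sigma> x v * Dop t \<alpha> \<beta> \<sigma> (h t) x v) \<partial>lborel)))"

definition akernel :: "real \<Rightarrow> 3 \<Rightarrow> 3 \<Rightarrow> vec3 \<Rightarrow> real" where
  "akernel \<gamma> i j z = ((if i = j then 1 else 0) - z $ i * z $ j / (norm z)\<^sup>2) * norm z powr (\<gamma> + 2)"

definition ckernel :: "real \<Rightarrow> vec3 \<Rightarrow> real" where
  "ckernel \<gamma> z = (\<Sum>i\<in>UNIV. \<Sum>j\<in>UNIV. pd1 i (pd1 j (akernel \<gamma> i j)) z)"

definition abar :: "real \<Rightarrow> (real \<Rightarrow> phase_fun) \<Rightarrow> 3 \<Rightarrow> 3 \<Rightarrow> real \<Rightarrow> vec3 \<Rightarrow> vec3 \<Rightarrow> real" where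
  "abar \<gamma> f i j t x v = (LINT w|lborel. akernel \<gamma> i j (v - w) * f t x w)"

definition cbar :: "real \<Rightarrow> (real \<Rightarrow> phase_fun) \<Rightarrow> real \<Rightarrow> vec3 \<Rightarrow> vec3 \<Rightarrow> real" where
  "cbar \<gamma> f t x v = (LINT w|lborel. ckernel \<gamma> (v - w) * f t x w)"

fun iterpd :: "(bool \<times> 3) list \<Rightarrow> phase_fun \<Rightarrow> phase_fun" where
  "iterpd [] h = h"
| "iterpd ((b, i) # ds) h = (if b then pdx i else pdv i) (iterpd ds h)"

text \<open>Regularity: all iterated partial derivatives in (x,v) are (Frechet) differentiable,
  i.e. h is C^infinity in (x,v).\<close>
definition smooth_xv :: "phase_fun \<Rightarrow> bool" where
  "smooth_xv h \<longleftrightarrow> (\<forall>ds p. (\<lambda>q. iterpd ds h (fst q) (snd q)) differentiable (at p))"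

definition dweight :: "real \<Rightarrow> real \<Rightarrow> real \<Rightarrow> real" where
  "dweight d0 \<delta> t = d0 * (1 + (1 + t) powr (- \<delta>))"

definition gfun :: "real \<Rightarrow> real \<Rightarrow> (real \<Rightarrow> phase_fun) \<Rightarrow> real \<Rightarrow> phase_fun" where
  "gfun d0 \<delta> f t x v = exp (dweight d0 \<delta> t * jbr v) * f t x v"

definition initial_small :: "real \<Rightarrow> real \<Rightarrow> phase_fun \<Rightarrow> bool" where
  "initial_small d0 \<epsilon> fini \<longleftrightarrow>
     (\<Sum>(\<alpha>,\<beta>,\<sigma>) \<in> {(\<alpha>,\<beta>,\<sigma>). msize \<alpha> + msize \<beta> + msize \<sigma> \<le> 10}.
        L2sq (\<lambda>x v. jbr v powr (20 - 3/2 * real (msize \<alpha>) - 1/2 * real (msize \<beta>) - 3/2 * real (msize \<sigma>))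
                 * jbr (x - v) powr (20 - 3/2 * real (msize \<sigma>) - 1/2 * real (msize \<beta>) - 1/2 * real (msize \<alpha>))
                 * Dop 0 \<alpha> \<beta> \<sigma> (\<lambda>y w. exp (2 * d0 * jbr w) * fini y w) x v))
     < ennreal \<epsilon>"

text \<open>f is a (sufficiently regular) nonnegative solution of the Landau equation on
  [0,Tb) with initial datum fini (time derivative one-sided at t = 0).\<close>
definition landau_solution :: "real \<Rightarrow> real \<Rightarrow> phase_fun \<Rightarrow> (real \<Rightarrow> phase_fun) \<Rightarrow> bool" where
  "landau_solution \<gamma> Tb fini f \<longleftrightarrow>
     f 0 = fini \<and>
     (\<forall>t\<in>{0..<Tb}. smooth_xv (f t)) \<and>
     (\<forall>t\<in>{0..<Tb}. \<forall>x v. f t x v \<ge> 0) \<and>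
     (\<forall>t\<in>{0..<Tb}. \<forall>x v. \<exists>ft.
        ((\<lambda>s. f s x v) has_real_derivative ft) (at t within {0..<Tb}) \<and>
        ft + (\<Sum>i\<in>UNIV. v $ i * pdx i (f t) x v)
          = (\<Sum>i\<in>UNIV. \<Sum>j\<in>UNIV. abar \<gamma> f i j t x v * pdv i (pdv j (f t)) x v)
            - cbar \<gamma> f t x v * f t x v)"

definition bootstrap_setting ::
  "real \<Rightarrow> real \<Rightarrow> real \<Rightarrow> real \<Rightarrow> real \<Rightarrow> phase_fun \<Rightarrow> (real \<Rightarrow> phase_fun) \<Rightarrow> bool" where
  "bootstrap_setting d0 \<gamma> \<delta> \<epsilon> Tb fini f \<longleftrightarrow>
     0 < \<delta> \<and> \<delta> < 1/8 \<and> 0 \<le> \<epsilon> \<and> 0 < Tb \<and>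
     initial_small d0 \<epsilon> fini \<and>
     landau_solution \<gamma> Tb fini f \<and>
     (\<forall>T\<in>{0..<Tb}. ETsq \<delta> (gfun d0 \<delta> f) T \<le> ennreal (\<epsilon> powr (3/2)))"

definition lower_pairs :: "mindex \<Rightarrow> mindex \<Rightarrow> (mindex \<times> mindex) set" where
  "lower_pairs \<beta> \<sigma> = {(\<beta>', \<sigma>'). msize \<beta>' \<le> msize \<beta> \<and> msize \<sigma>' \<le> msize \<sigma> \<and>
                                   msize \<beta>' + msize \<sigma>' + 1 \<le> msize \<beta> + msize \<sigma>}"

definition T2term :: "real \<Rightarrow> (real \<Rightarrow> phase_fun) \<Rightarrow> mindex \<Rightarrow> mindex \<Rightarrow> mindex \<Rightarrow> real \<Rightarrow> ennreal" where
  "T2term \<delta> g \<alpha> \<beta> \<sigma> T = (\<Sum>(\<beta>',\<sigma>') \<in> lower_pairs \<beta> \<sigma>.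
     \<integral>\<^sup>+ t\<in>{0..T}. (\<integral>\<^sup>+ x. (\<integral>\<^sup>+ v. ennreal (
        (1 + t) powr (-(1 + \<delta>)) * (Wt t \<alpha> \<beta> \<sigma> x v)\<^sup>2 *
        \<bar>Dop t \<alpha> \<beta> \<sigma> (g t) x v\<bar> * \<bar>Dop t \<alpha> \<beta>' \<sigma>' (g t) x v\<bar>) \<partial>lborel) \<partial>lborel) \<partial>lborel)"

definition wL2sq :: "real \<Rightarrow> (real \<Rightarrow> phase_fun) \<Rightarrow> mindex \<Rightarrow> mindex \<Rightarrow> mindex \<Rightarrow> real \<Rightarrow> ennreal" where
  "wL2sq \<delta> g \<alpha> \<beta> \<sigma> T = (\<integral>\<^sup>+ t\<in>{0..T}.
     L2sq (\<lambda>x v. (1 + t) powr (- 1/2 - \<delta>/2) * Wt t \<alpha> \<beta> \<sigma> x v * Dop t \<alpha> \<beta> \<sigma> (g t) x v) \<partial>lborel)"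

end

(*
  Each summand of T2 is bounded pointwise by Young's inequality
  |D g| |D' g| <= e |D g|^2 + |D' g|^2 / e, where D' is the lower-order derivative: its
  weight W_{alpha,beta',sigma'} dominates W_{alpha,beta,sigma}, which occurs squared in T2,
  and ((1+t)^(-1/2-delta/2))^2 = (1+t)^(-1-delta). Integrating and summing over the lower
  pairs, whose number is bounded by some N independent of alpha, beta, sigma, gives the
  estimate with e = eta / N and C = 1 / e.

  Integrating the pointwise bound needs additivity of the nonnegative integral, hence joint
  measurability of (t, x, v) |-> D g. It holds because g is smooth in (x, v) and continuous
  in t, and derivatives are pointwise limits of difference quotients.
*)
theory Submission
  imports Defs
begin

section \<open>Smoothness in the phase variables\<close>

definition pdir :: "vec3 \<Rightarrow> vec3 \<Rightarrow> phase_fun \<Rightarrow> phase_fun" where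
  "pdir a b h x v = deriv (\<lambda>s. h (x + s *\<^sub>R a) (v + s *\<^sub>R b)) 0"

lemma pdx_eq_pdir: "pdx i = pdir (axis i 1) 0"
  by (intro ext) (simp add: pdx_def pd1_def pdir_def)

lemma pdv_eq_pdir: "pdv i = pdir 0 (axis i 1)"
  by (intro ext) (simp add: pdv_def pd1_def pdir_def)

definition differentiable_xv :: "phase_fun \<Rightarrow> bool" where
  "differentiable_xv h \<longleftrightarrow> (\<forall>p. (\<lambda>q. h (fst q) (snd q)) differentiable (at p))"

lemma has_real_derivative_pdir:
  assumes "differentiable_xv h"
  shows "((\<lambda>s. h (x + s *\<^sub>R a) (v + s *\<^sub>R b)) has_real_derivative pdir a b h x v) (at 0)"
proof -
  have "((\<lambda>s::real. (x + s *\<^sub>R a, v + s *\<^sub>R b)) has_derivative (\<lambda>s. (s *\<^sub>R a, s *\<^sub>R b))) (at 0)"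
    by (auto intro!: derivative_eq_intros)
  then have "(\<lambda>s::real. (x + s *\<^sub>R a, v + s *\<^sub>R b)) differentiable (at 0)"
    by (rule differentiableI)
  moreover have "(\<lambda>q. h (fst q) (snd q)) differentiable (at (x + 0 *\<^sub>R a, v + 0 *\<^sub>R b))"
    using assms by (simp add: differentiable_xv_def)
  ultimately have "((\<lambda>q. h (fst q) (snd q)) \<circ> (\<lambda>s. (x + s *\<^sub>R a, v + s *\<^sub>R b))) differentiable (at 0)"
    by (rule differentiable_chain_at)
  then show ?thesis
    by (simp add: pdir_def o_def DERIV_deriv_iff_real_differentiable)
qed

lemma differentiable_xv_const: "differentiable_xv (\<lambda>x v. c)"
  by (simp add: differentiable_xv_def)

lemma differentiable_xv_add:
  "differentiable_xv h1 \<Longrightarrow> differentiable_xv h2 \<Longrightarrow> differentiable_xv (\<lambda>x v. h1 x v + h2 x v)"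
  by (auto simp: differentiable_xv_def intro: differentiable_add)

lemma differentiable_xv_mult:
  "differentiable_xv h1 \<Longrightarrow> differentiable_xv h2 \<Longrightarrow> differentiable_xv (\<lambda>x v. h1 x v * h2 x v)"
  by (auto simp: differentiable_xv_def intro: differentiable_mult)

lemma pdir_const: "pdir a b (\<lambda>x v. c) = (\<lambda>x v. 0)"
  by (intro ext) (simp add: pdir_def DERIV_imp_deriv[OF DERIV_const])

lemma pdir_add:
  assumes "differentiable_xv h1" "differentiable_xv h2"
  shows "pdir a b (\<lambda>x v. h1 x v + h2 x v) = (\<lambda>x v. pdir a b h1 x v + pdir a b h2 x v)"
  using DERIV_add[OF has_real_derivative_pdir[OF assms(1)] has_real_derivative_pdir[OF assms(2)]]
  by (intro ext) (simp add: pdir_def DERIV_imp_deriv)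

lemma pdir_mult:
  assumes "differentiable_xv h1" "differentiable_xv h2"
  shows "pdir a b (\<lambda>x v. h1 x v * h2 x v) = (\<lambda>x v. pdir a b h1 x v * h2 x v + h1 x v * pdir a b h2 x v)"
  using DERIV_mult[OF has_real_derivative_pdir[OF assms(1)] has_real_derivative_pdir[OF assms(2)]]
  by (intro ext) (simp add: pdir_def DERIV_imp_deriv mult.commute)

inductive_set phase_algebra :: "phase_fun set \<Rightarrow> phase_fun set" for G where
  gen: "h \<in> G \<Longrightarrow> h \<in> phase_algebra G"
| const: "(\<lambda>x v. c) \<in> phase_algebra G"
| add: "h1 \<in> phase_algebra G \<Longrightarrow> h2 \<in> phase_algebra G \<Longrightarrow> (\<lambda>x v. h1 x v + h2 x v) \<in> phase_algebra G"
| mult: "h1 \<in> phase_algebra G \<Longrightarrow> h2 \<in> phase_algebra G \<Longrightarrow> (\<lambda>x v. h1 x v * h2 x v) \<in> phase_algebra G"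

lemma differentiable_xv_phase_algebra:
  assumes "\<And>g. g \<in> G \<Longrightarrow> differentiable_xv g" "h \<in> phase_algebra G"
  shows "differentiable_xv h"
  using assms(2)
  by induction (auto intro: assms(1) differentiable_xv_const differentiable_xv_add differentiable_xv_mult)

lemma pdir_phase_algebra:
  assumes diff: "\<And>g. g \<in> G \<Longrightarrow> differentiable_xv g"
    and closed: "\<And>g. g \<in> G \<Longrightarrow> pdir a b g \<in> phase_algebra G"
    and "h \<in> phase_algebra G"
  shows "pdir a b h \<in> phase_algebra G"
  using assms(3)
proof induction
  case (gen h)
  then show ?case by (rule closed)
next
  case (const c)
  then show ?case by (simp add: pdir_const phase_algebra.const)
next
  case (add h1 h2)
  then show ?case
    by (simp add: pdir_add differentiable_xv_phase_algebra[OF diff] phase_algebra.add)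
next
  case (mult h1 h2)
  then show ?case
    by (simp add: pdir_mult differentiable_xv_phase_algebra[OF diff] phase_algebra.add phase_algebra.mult)
qed

lemma smooth_xv_iff: "smooth_xv h \<longleftrightarrow> (\<forall>ds. differentiable_xv (iterpd ds h))"
  by (simp add: smooth_xv_def differentiable_xv_def)

lemma smooth_xv_imp_differentiable_xv: "smooth_xv h \<Longrightarrow> differentiable_xv h"
  using iterpd.simps(1) by (metis smooth_xv_iff)

lemma smooth_xv_phase_algebra:
  assumes diff: "\<And>g. g \<in> G \<Longrightarrow> differentiable_xv g"
    and closed: "\<And>g i. g \<in> G \<Longrightarrow> pdx i g \<in> phase_algebra G \<and> pdv i g \<in> phase_algebra G"
    and "h \<in> phase_algebra G"
  shows "smooth_xv h"
proof -
  have "iterpd ds h \<in> phase_algebra G" for ds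
  proof (induction ds)
    case Nil
    then show ?case using assms(3) by simp
  next
    case (Cons d ds)
    then show ?case
      using closed pdir_phase_algebra[OF diff] by (cases d) (auto simp: pdx_eq_pdir pdv_eq_pdir)
  qed
  then show ?thesis
    by (auto simp: smooth_xv_iff intro: differentiable_xv_phase_algebra[OF diff])
qed

lemma iterpd_append: "iterpd (ds @ es) h = iterpd ds (iterpd es h)"
  by (induction ds) auto

lemma smooth_xv_iterpd: "smooth_xv h \<Longrightarrow> smooth_xv (iterpd es h)"
  by (simp add: smooth_xv_iff flip: iterpd_append)

lemma smooth_xv_pdx: "smooth_xv h \<Longrightarrow> smooth_xv (pdx i h)"
  using smooth_xv_iterpd[of h "[(True, i)]"] by simp

lemma smooth_xv_pdv: "smooth_xv h \<Longrightarrow> smooth_xv (pdv i h)"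
  using smooth_xv_iterpd[of h "[(False, i)]"] by simp

text \<open>The iterated derivatives of smooth functions generate an algebra that is closed
  under differentiation.\<close>
lemma smooth_xv_phase_algebra_iterpd:
  assumes "\<And>h. h \<in> H \<Longrightarrow> smooth_xv h"
    and "k \<in> phase_algebra (\<Union>h\<in>H. range (\<lambda>ds. iterpd ds h))"
  shows "smooth_xv k"
proof (rule smooth_xv_phase_algebra[OF _ _ assms(2)])
  fix g assume "g \<in> (\<Union>h\<in>H. range (\<lambda>ds. iterpd ds h))"
  then show "differentiable_xv g" using assms(1) by (auto simp: smooth_xv_iff)
next
  fix g i assume "g \<in> (\<Union>h\<in>H. range (\<lambda>ds. iterpd ds h))"
  then obtain h ds where "h \<in> H" "g = iterpd ds h" by auto
  then have "pdx i g \<in> (\<Union>h\<in>H. range (\<lambda>ds. iterpd ds h))" "pdv i g \<in> (\<Union>h\<in>H. range (\<lambda>ds. iterpd ds h))"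
    using rangeI[of "\<lambda>ds. iterpd ds h" "(True, i) # ds"] rangeI[of "\<lambda>ds. iterpd ds h" "(False, i) # ds"]
    by auto
  then show "pdx i g \<in> phase_algebra (\<Union>h\<in>H. range (\<lambda>ds. iterpd ds h)) \<and>
      pdv i g \<in> phase_algebra (\<Union>h\<in>H. range (\<lambda>ds. iterpd ds h))"
    by (auto intro: phase_algebra.gen)
qed

lemma iterpd_Nil_in_range: "h \<in> range (\<lambda>ds. iterpd ds h)"
  by (rule range_eqI[of _ _ "[]"]) simp

lemma smooth_xv_const: "smooth_xv (\<lambda>x v. c)"
  by (rule smooth_xv_phase_algebra_iterpd[where H="{}"]) (auto intro: phase_algebra.const)

lemma smooth_xv_add:
  assumes "smooth_xv h1" "smooth_xv h2"
  shows "smooth_xv (\<lambda>x v. h1 x v + h2 x v)"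
proof (rule smooth_xv_phase_algebra_iterpd[where H="{h1, h2}"])
  show "(\<lambda>x v. h1 x v + h2 x v) \<in> phase_algebra (\<Union>h\<in>{h1, h2}. range (\<lambda>ds. iterpd ds h))"
    using iterpd_Nil_in_range[of h1] iterpd_Nil_in_range[of h2]
    by (intro phase_algebra.add phase_algebra.gen) auto
qed (use assms in auto)

lemma smooth_xv_mult:
  assumes "smooth_xv h1" "smooth_xv h2"
  shows "smooth_xv (\<lambda>x v. h1 x v * h2 x v)"
proof (rule smooth_xv_phase_algebra_iterpd[where H="{h1, h2}"])
  show "(\<lambda>x v. h1 x v * h2 x v) \<in> phase_algebra (\<Union>h\<in>{h1, h2}. range (\<lambda>ds. iterpd ds h))"
    using iterpd_Nil_in_range[of h1] iterpd_Nil_in_range[of h2]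
    by (intro phase_algebra.mult phase_algebra.gen) auto
qed (use assms in auto)

lemma smooth_xv_Yop:
  assumes "smooth_xv h"
  shows "smooth_xv (Yop t i h)"
proof -
  have "Yop t i h = (\<lambda>x v. (t + 1) * pdx i h x v + pdv i h x v)"
    by (simp add: Yop_def fun_eq_iff)
  then show ?thesis
    using smooth_xv_add[OF smooth_xv_mult[OF smooth_xv_const smooth_xv_pdx[OF assms]] smooth_xv_pdv[OF assms]]
    by simp
qed

lemma jbr_pos: "0 < jbr v"
  unfolding jbr_def by (simp add: add_pos_nonneg)

lemma jbr_ge_1: "1 \<le> jbr v"
  unfolding jbr_def by simp

lemma jbr_eq_sqrt_inner: "jbr v = sqrt (1 + v \<bullet> v)"
  by (simp add: jbr_def power2_norm_eq_inner)

lemma jbr_line: "jbr (v + s *\<^sub>R axis i 1) = sqrt (1 + ((norm v)\<^sup>2 + 2 * s * v $ i + s\<^sup>2))"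
proof -
  have "(norm (v + s *\<^sub>R axis i 1))\<^sup>2 = (norm v)\<^sup>2 + 2 * s * v $ i + s\<^sup>2"
    by (simp only: power2_norm_eq_inner)
      (simp add: inner_add_left inner_add_right inner_axis inner_axis' power2_eq_square algebra_simps)
  then show ?thesis
    by (simp add: jbr_def)
qed

lemma has_real_derivative_jbr_line:
  "((\<lambda>s. jbr (v + s *\<^sub>R axis i 1)) has_real_derivative v $ i / jbr v) (at 0)"
proof -
  have "0 < 1 + ((norm v)\<^sup>2 + 2 * 0 * v $ i + 0\<^sup>2)"
    by (simp add: add_pos_nonneg)
  then have "((\<lambda>s. sqrt (1 + ((norm v)\<^sup>2 + 2 * s * v $ i + s\<^sup>2))) has_real_derivative
      v $ i / sqrt (1 + (norm v)\<^sup>2)) (at 0)"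
    by (auto intro!: derivative_eq_intros simp: divide_simps)
  then show ?thesis
    unfolding jbr_line by (simp add: jbr_def)
qed

lemma has_real_derivative_exp_jbr_line:
  "((\<lambda>s. exp (d * jbr (v + s *\<^sub>R axis i 1))) has_real_derivative
     d * (v $ i / jbr v) * exp (d * jbr v)) (at 0)"
  using has_real_derivative_jbr_line[of v i]
  by (auto intro!: derivative_eq_intros)

lemma has_real_derivative_inverse_jbr_line:
  "((\<lambda>s. inverse (jbr (v + s *\<^sub>R axis i 1))) has_real_derivative - (v $ i / jbr v ^ 3)) (at 0)"
  using has_real_derivative_jbr_line[of v i] jbr_pos[of v]
  by (auto intro!: derivative_eq_intros simp: field_simps power3_eq_cube)

lemma differentiable_jbr: "jbr differentiable (at v)"
  unfolding jbr_eq_sqrt_inner[abs_def]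
  by (rule differentiableI, rule derivative_intros) (auto intro!: derivative_intros simp: add_pos_nonneg)

lemma differentiable_exp_jbr: "(\<lambda>v. exp (d * jbr v)) differentiable (at v)"
proof (rule differentiable_compose[where f=exp])
  show "exp differentiable (at (d * jbr v))"
    by (rule differentiableI[OF has_field_derivative_imp_has_derivative[OF DERIV_exp]])
qed (intro differentiable_mult differentiable_const differentiable_jbr)

lemma differentiable_inverse_jbr: "(\<lambda>v. inverse (jbr v)) differentiable (at v)"
  using jbr_pos[of v] by (intro differentiable_inverse differentiable_jbr) auto

lemma differentiable_xv_vfun:
  assumes "\<And>v. \<phi> differentiable (at v)"
  shows "differentiable_xv (\<lambda>x v. \<phi> v)"
proof -
  have "\<phi> \<circ> snd differentiable (at p)" for p :: "vec3 \<times> vec3"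
    by (intro differentiable_chain_at assms bounded_linear_imp_differentiable bounded_linear_snd)
  then show ?thesis by (simp add: differentiable_xv_def o_def)
qed

lemma pdx_vfun: "pdx i (\<lambda>x v. \<phi> v) = (\<lambda>x v. 0)"
  by (intro ext) (simp add: pdx_def pd1_def DERIV_imp_deriv[OF DERIV_const])

lemma pdv_vfun:
  "((\<lambda>s. \<phi> (v + s *\<^sub>R axis i 1)) has_real_derivative D) (at 0) \<Longrightarrow> pdv i (\<lambda>x v. \<phi> v) x v = D"
  by (simp add: pdv_def pd1_def DERIV_imp_deriv)

lemma pdv_exp_jbr: "pdv i (\<lambda>x v. exp (d * jbr v)) = (\<lambda>x v. d * (v $ i / jbr v) * exp (d * jbr v))"
  by (intro ext pdv_vfun has_real_derivative_exp_jbr_line)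

lemma pdv_inverse_jbr: "pdv i (\<lambda>x v. inverse (jbr v)) = (\<lambda>x v. - (v $ i / jbr v ^ 3))"
  by (intro ext pdv_vfun has_real_derivative_inverse_jbr_line)

lemma pdv_coordinate: "pdv i (\<lambda>x v. v $ j) = (\<lambda>x v. if j = i then 1 else 0)"
  by (intro ext pdv_vfun) (auto intro!: derivative_eq_intros simp: axis_def)

text \<open>\<open>exp (d \<langle>v\<rangle>)\<close>, \<open>1 / \<langle>v\<rangle>\<close> and the coordinates \<open>v\<^sub>j\<close> generate an algebra closed under
  differentiation.\<close>
lemma smooth_xv_exp_jbr: "smooth_xv (\<lambda>x v. exp (d * jbr v))"
proof -
  define E where "E = (\<lambda>(x::vec3) v. exp (d * jbr v))"
  define J where "J = (\<lambda>(x::vec3) v. inverse (jbr v))"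
  define V where "V j = (\<lambda>(x::vec3) (v::vec3). v $ j)" for j
  define G where "G = {E, J} \<union> range V"
  have gen: "E \<in> phase_algebra G" "J \<in> phase_algebra G" "V j \<in> phase_algebra G" for j
    by (auto intro: phase_algebra.gen simp: G_def)
  have diff: "differentiable_xv g" if "g \<in> G" for g
  proof -
    have "(\<lambda>v. v $ j) differentiable (at v)" for v j
      by (intro bounded_linear_imp_differentiable bounded_linear_vec_nth)
    then show ?thesis
      using that differentiable_exp_jbr differentiable_inverse_jbr
      by (auto simp: G_def E_def J_def V_def intro!: differentiable_xv_vfun)
  qed
  have closed: "pdx i g \<in> phase_algebra G \<and> pdv i g \<in> phase_algebra G" if g: "g \<in> G" for g i
  proof -
    have pdx_g: "pdx i g = (\<lambda>x v. 0)"
      using g by (auto simp: G_def E_def J_def V_def pdx_vfun)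
    consider "g = E" | "g = J" | j where "g = V j"
      using g by (auto simp: G_def)
    then have "pdv i g \<in> phase_algebra G"
    proof cases
      case 1
      have "pdv i E = (\<lambda>x v. d * V i x v * J x v * E x v)"
        unfolding E_def J_def V_def pdv_exp_jbr by (simp add: divide_inverse mult.assoc)
      then show ?thesis
        unfolding 1 by (simp only:) (intro phase_algebra.mult phase_algebra.const gen)
    next
      case 2
      have "pdv i J = (\<lambda>x v. - 1 * V i x v * (J x v * J x v * J x v))"
        unfolding J_def V_def pdv_inverse_jbr by (simp add: divide_inverse power3_eq_cube)
      then show ?thesis
        unfolding 2 by (simp only:) (intro phase_algebra.mult phase_algebra.const gen)
    next
      case 3
      show ?thesis
        unfolding 3 V_def pdv_coordinate by (rule phase_algebra.const)
    qed
    then show ?thesis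
      by (simp add: pdx_g phase_algebra.const)
  qed
  show ?thesis
    using smooth_xv_phase_algebra[OF diff closed gen(1)] by (simp add: E_def)
qed

lemma smooth_xv_gfun: "smooth_xv (f t) \<Longrightarrow> smooth_xv (gfun d0 \<delta> f t)"
  using smooth_xv_mult[OF smooth_xv_exp_jbr] by (simp add: gfun_def[abs_def])

section \<open>Measurability in time and phase variables\<close>

abbreviation txv_measure :: "((real \<times> vec3) \<times> vec3) measure" where
  "txv_measure \<equiv> (lborel \<Otimes>\<^sub>M lborel) \<Otimes>\<^sub>M lborel"

definition phase_measurable :: "(real \<Rightarrow> phase_fun) \<Rightarrow> bool" where
  "phase_measurable K \<longleftrightarrow>
     (\<lambda>p. K (fst (fst p)) (snd (fst p)) (snd p)) \<in> borel_measurable txv_measure"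

definition regular_family :: "(real \<Rightarrow> phase_fun) \<Rightarrow> bool" where
  "regular_family K \<longleftrightarrow> phase_measurable K \<and> (\<forall>t. smooth_xv (K t))"

lemma difference_quotient_LIMSEQ:
  assumes "(\<phi> has_real_derivative D) (at 0)"
  shows "(\<lambda>n. (\<phi> (inverse (real (Suc n))) - \<phi> 0) * real (Suc n)) \<longlonglongrightarrow> D"
proof -
  have "((\<lambda>h. (\<phi> (0 + h) - \<phi> 0) / h) \<longlongrightarrow> D) (at 0)"
    using assms by (simp add: DERIV_def)
  moreover have "filterlim (\<lambda>n. inverse (real (Suc n))) (at 0) sequentially"
    unfolding filterlim_at using LIMSEQ_inverse_real_of_nat by auto
  ultimately show ?thesis
    using filterlim_compose by (fastforce simp: divide_inverse)
qed

lemma phase_measurable_pdir: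
  assumes meas: "phase_measurable K" and diff: "\<And>t. differentiable_xv (K t)"
  shows "phase_measurable (\<lambda>t. pdir a b (K t))"
proof -
  let ?K = "\<lambda>p. K (fst (fst p)) (snd (fst p)) (snd p)"
  let ?shift = "\<lambda>n p. ((fst (fst p), snd (fst p) + inverse (real (Suc n)) *\<^sub>R a),
    snd p + inverse (real (Suc n)) *\<^sub>R b)"
  have "(\<lambda>p. pdir a b (K (fst (fst p))) (snd (fst p)) (snd p)) \<in> borel_measurable txv_measure"
  proof (rule borel_measurable_LIMSEQ_real)
    fix p :: "(real \<times> vec3) \<times> vec3"
    show "(\<lambda>n. (?K (?shift n p) - ?K p) * real (Suc n)) \<longlonglongrightarrow> pdir a b (K (fst (fst p))) (snd (fst p)) (snd p)"
      using difference_quotient_LIMSEQ[OF has_real_derivative_pdir[OF diff]] by simp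
  next
    fix n
    have "?shift n \<in> txv_measure \<rightarrow>\<^sub>M txv_measure"
      by measurable
    then have "?K \<circ> ?shift n \<in> borel_measurable txv_measure"
      using meas unfolding phase_measurable_def by (rule measurable_comp)
    then show "(\<lambda>p. (?K (?shift n p) - ?K p) * real (Suc n)) \<in> borel_measurable txv_measure"
      using meas unfolding phase_measurable_def o_def by measurable
  qed
  then show ?thesis
    by (simp add: phase_measurable_def)
qed

lemma regular_family_pdx: "regular_family K \<Longrightarrow> regular_family (\<lambda>t. pdx i (K t))"
  using phase_measurable_pdir[of K] smooth_xv_pdx smooth_xv_imp_differentiable_xv
  by (simp add: regular_family_def pdx_eq_pdir)

lemma regular_family_pdv: "regular_family K \<Longrightarrow> regular_family (\<lambda>t. pdv i (K t))"
  using phase_measurable_pdir[of K] smooth_xv_pdv smooth_xv_imp_differentiable_xv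
  by (simp add: regular_family_def pdv_eq_pdir)

lemma regular_family_Yop:
  assumes "regular_family K"
  shows "regular_family (\<lambda>t. Yop t i (K t))"
proof -
  have "phase_measurable (\<lambda>t. pdx i (K t))" "phase_measurable (\<lambda>t. pdv i (K t))"
    using regular_family_pdx[OF assms] regular_family_pdv[OF assms] by (simp_all add: regular_family_def)
  then have "phase_measurable (\<lambda>t. Yop t i (K t))"
    unfolding phase_measurable_def Yop_def by measurable
  then show ?thesis
    using assms smooth_xv_Yop by (simp add: regular_family_def)
qed

lemma regular_family_funpow:
  assumes "\<And>K. regular_family K \<Longrightarrow> regular_family (\<lambda>t. Q t (K t))" "regular_family K"
  shows "regular_family (\<lambda>t. (Q t ^^ n) (K t))"
  by (induction n) (use assms in auto)

lemma regular_family_mpow: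
  assumes "\<And>K i. regular_family K \<Longrightarrow> regular_family (\<lambda>t. Q t i (K t))" "regular_family K"
  shows "regular_family (\<lambda>t. mpow (Q t) \<alpha> (K t))"
  unfolding mpow_def by (intro regular_family_funpow[where Q="\<lambda>t. Q t _"] assms)

lemma regular_family_Dop: "regular_family K \<Longrightarrow> regular_family (\<lambda>t. Dop t \<alpha> \<beta> \<sigma> (K t))"
  unfolding Dop_def
  by (intro regular_family_mpow[where Q="\<lambda>t. pdx"] regular_family_mpow[where Q="\<lambda>t. pdv"]
      regular_family_mpow[where Q="\<lambda>t. Yop t"] regular_family_pdx regular_family_pdv regular_family_Yop)

lemma borel_measurable_slice:
  assumes "continuous_on UNIV (\<lambda>q. h (fst q) (snd q))"
  shows "(\<lambda>p. h (snd (fst p)) (snd p)) \<in> borel_measurable txv_measure"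
proof -
  have xv: "(\<lambda>p. (snd (fst p), snd p)) \<in> txv_measure \<rightarrow>\<^sub>M borel"
    unfolding lborel_prod[symmetric] by measurable
  have "(\<lambda>q. h (fst q) (snd q)) \<in> borel_measurable borel"
    using assms by (rule borel_measurable_continuous_onI)
  from measurable_compose[OF xv this] show ?thesis
    by simp
qed

definition grid_below :: "nat \<Rightarrow> real \<Rightarrow> real" where
  "grid_below n t = real_of_int \<lfloor>real (Suc n) * t\<rfloor> / real (Suc n)"

lemma grid_below_le: "grid_below n t \<le> t"
  unfolding grid_below_def by (simp add: divide_le_eq mult.commute)

lemma grid_below_nonneg: "0 \<le> t \<Longrightarrow> 0 \<le> grid_below n t"
  unfolding grid_below_def by simp

lemma grid_below_ge: "t - inverse (real (Suc n)) \<le> grid_below n t"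
proof -
  have "t - inverse (real (Suc n)) = (real (Suc n) * t - 1) / real (Suc n)"
    by (simp add: field_simps)
  also have "\<dots> \<le> grid_below n t"
    unfolding grid_below_def by (intro divide_right_mono) linarith+
  finally show ?thesis .
qed

lemma grid_below_LIMSEQ: "(\<lambda>n. grid_below n t) \<longlonglongrightarrow> t"
proof (rule tendsto_sandwich[where f="\<lambda>n. t - inverse (real (Suc n))" and h="\<lambda>n. t"])
  show "(\<lambda>n. t - inverse (real (Suc n))) \<longlonglongrightarrow> t"
    using tendsto_diff[OF tendsto_const LIMSEQ_inverse_real_of_nat, of t] by simp
  show "\<forall>\<^sub>F n in sequentially. t - inverse (real (Suc n)) \<le> grid_below n t"
    by (intro always_eventually allI grid_below_ge)
  show "\<forall>\<^sub>F n in sequentially. grid_below n t \<le> t"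
    by (intro always_eventually allI grid_below_le)
qed simp

text \<open>A function continuous in \<open>(x, v)\<close> and in \<open>t\<close> separately is jointly measurable:
  it is the pointwise limit of its samples at the grid times below \<open>t\<close>.\<close>
lemma phase_measurable_time_cutoff:
  assumes cont_xv: "\<And>t. 0 \<le> t \<Longrightarrow> t < Tb \<Longrightarrow> continuous_on UNIV (\<lambda>q. f t (fst q) (snd q))"
    and cont_t: "\<And>t x v. 0 \<le> t \<Longrightarrow> t < Tb \<Longrightarrow> continuous (at t within {0..<Tb}) (\<lambda>s. f s x v)"
  shows "phase_measurable (\<lambda>t x v. if 0 \<le> t \<and> t < Tb then f t x v else 0)"
proof -
  define F where "F t x v = (if 0 \<le> t \<and> t < Tb then f t x v else 0)" for t x v
  have slice: "(\<lambda>p. F c (snd (fst p)) (snd p)) \<in> borel_measurable txv_measure" for c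
  proof (cases "0 \<le> c \<and> c < Tb")
    case True
    then show ?thesis
      using borel_measurable_slice[OF cont_xv] by (simp add: F_def)
  qed (auto simp: F_def)
  have "(\<lambda>p. F (fst (fst p)) (snd (fst p)) (snd p)) \<in> borel_measurable txv_measure"
  proof (rule borel_measurable_LIMSEQ_real)
    fix n
    have "(\<lambda>p. \<lfloor>real (Suc n) * fst (fst p)\<rfloor>) \<in> txv_measure \<rightarrow>\<^sub>M count_space UNIV"
      by measurable
    then have "(\<lambda>p. F (grid_below n (fst (fst p))) (snd (fst p)) (snd p)) \<in> borel_measurable txv_measure"
      unfolding grid_below_def by (rule measurable_compose_countable[OF slice])
    then show "(\<lambda>p. if 0 \<le> fst (fst p) \<and> fst (fst p) < Tb
        then F (grid_below n (fst (fst p))) (snd (fst p)) (snd p) else 0) \<in> borel_measurable txv_measure"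
      by (rule measurable_If) measurable
  next
    fix p :: "(real \<times> vec3) \<times> vec3"
    show "(\<lambda>n. if 0 \<le> fst (fst p) \<and> fst (fst p) < Tb
        then F (grid_below n (fst (fst p))) (snd (fst p)) (snd p) else 0)
      \<longlonglongrightarrow> F (fst (fst p)) (snd (fst p)) (snd p)"
    proof (cases "0 \<le> fst (fst p) \<and> fst (fst p) < Tb")
      case True
      then have grid_in: "grid_below n (fst (fst p)) \<in> {0..<Tb}" for n
        using grid_below_nonneg[of "fst (fst p)" n] grid_below_le[of n "fst (fst p)"] by auto
      have "(\<lambda>n. f (grid_below n (fst (fst p))) (snd (fst p)) (snd p)) \<longlonglongrightarrow> f (fst (fst p)) (snd (fst p)) (snd p)"
        using True grid_in grid_below_LIMSEQ by (intro continuous_within_tendsto_compose'[OF cont_t]) auto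
      then show ?thesis
        using True grid_in by (simp add: F_def)
    next
      case False
      then show ?thesis
        by (simp only: F_def if_not_P if_False tendsto_const)
    qed
  qed
  then show ?thesis
    by (simp add: phase_measurable_def F_def)
qed

lemma continuous_on_differentiable_xv:
  "differentiable_xv h \<Longrightarrow> continuous_on UNIV (\<lambda>q. h (fst q) (snd q))"
  unfolding differentiable_xv_def
  by (intro continuous_at_imp_continuous_on ballI differentiable_imp_continuous_within) auto

lemma continuous_gfun_time:
  assumes "0 \<le> t" and "continuous (at t within S) (\<lambda>s. f s x v)"
  shows "continuous (at t within S) (\<lambda>s. gfun d0 \<delta> f s x v)"
proof -
  have "continuous (at t) (\<lambda>s. exp (dweight d0 \<delta> s * jbr v))"
    using assms(1) unfolding dweight_def by (intro continuous_intros) auto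
  from continuous_at_imp_continuous_at_within[OF this] show ?thesis
    unfolding gfun_def using assms(2) by (rule continuous_mult)
qed

lemma landau_solution_smooth_xv:
  "landau_solution \<gamma> Tb fini f \<Longrightarrow> t \<in> {0..<Tb} \<Longrightarrow> smooth_xv (f t)"
  unfolding landau_solution_def by blast

lemma landau_solution_continuous_time:
  assumes "landau_solution \<gamma> Tb fini f" "t \<in> {0..<Tb}"
  shows "continuous (at t within {0..<Tb}) (\<lambda>s. f s x v)"
proof -
  note time_derivative = assms(1)[unfolded landau_solution_def, THEN conjunct2, THEN conjunct2, THEN conjunct2]
  obtain ft where "((\<lambda>s. f s x v) has_real_derivative ft) (at t within {0..<Tb})"
    using time_derivative assms(2) by blast
  then show ?thesis
    by (rule DERIV_continuous)
qed

lemma landau_solution_regular_extension: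
  assumes "landau_solution \<gamma> Tb fini f"
  shows "regular_family (\<lambda>t x v. if 0 \<le> t \<and> t < Tb then gfun d0 \<delta> f t x v else 0)"
proof -
  have smooth: "smooth_xv (gfun d0 \<delta> f t)" if "0 \<le> t" "t < Tb" for t
    using assms that by (simp add: landau_solution_smooth_xv smooth_xv_gfun)
  have "phase_measurable (\<lambda>t x v. if 0 \<le> t \<and> t < Tb then gfun d0 \<delta> f t x v else 0)"
  proof (rule phase_measurable_time_cutoff)
    fix t assume "0 \<le> t" "t < Tb"
    then show "continuous_on UNIV (\<lambda>q. gfun d0 \<delta> f t (fst q) (snd q))"
      using smooth by (simp add: continuous_on_differentiable_xv smooth_xv_imp_differentiable_xv)
  next
    fix t x v assume "0 \<le> t" "t < Tb"
    then show "continuous (at t within {0..<Tb}) (\<lambda>s. gfun d0 \<delta> f s x v)"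
      using assms by (simp add: continuous_gfun_time landau_solution_continuous_time)
  qed
  moreover have "smooth_xv (\<lambda>x v. if 0 \<le> t \<and> t < Tb then gfun d0 \<delta> f t x v else 0)" for t
  proof (cases "0 \<le> t \<and> t < Tb")
    case True
    then show ?thesis using smooth by simp
  next
    case False
    then show ?thesis using smooth_xv_const by (simp only: if_not_P if_False)
  qed
  ultimately show ?thesis
    by (simp add: regular_family_def)
qed

section \<open>Young's inequality and integration\<close>

lemma Wt_nonneg: "0 \<le> Wt t \<alpha> \<beta> \<sigma> x v"
  unfolding Wt_def by simp

lemma Wt_antimono:
  assumes "msize \<beta>' \<le> msize \<beta>" "msize \<sigma>' \<le> msize \<sigma>"
  shows "Wt t \<alpha> \<beta> \<sigma> x v \<le> Wt t \<alpha> \<beta>' \<sigma>' x v"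
proof -
  have le: "real (msize \<beta>') \<le> real (msize \<beta>)" "real (msize \<sigma>') \<le> real (msize \<sigma>)"
    using assms by simp_all
  have "nu_w \<alpha> \<beta> \<sigma> \<le> nu_w \<alpha> \<beta>' \<sigma>'"
    using le unfolding nu_w_def of_nat_add distrib_left by linarith
  moreover have "omega_w \<alpha> \<beta> \<sigma> \<le> omega_w \<alpha> \<beta>' \<sigma>'"
    using le unfolding omega_w_def of_nat_add distrib_left by linarith
  ultimately show ?thesis
    unfolding Wt_def by (intro mult_mono powr_mono jbr_ge_1) simp_all
qed

lemma abs_mult_le_young:
  fixes a b e :: real
  assumes "0 < e"
  shows "\<bar>a\<bar> * \<bar>b\<bar> \<le> e * a\<^sup>2 + b\<^sup>2 / e"
proof -
  have "2 * e * (\<bar>a\<bar> * \<bar>b\<bar>) \<le> (e * \<bar>a\<bar>)\<^sup>2 + \<bar>b\<bar>\<^sup>2"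
    using sum_squares_bound[of "e * \<bar>a\<bar>" "\<bar>b\<bar>"] by (simp add: mult.assoc)
  then have "2 * (\<bar>a\<bar> * \<bar>b\<bar>) \<le> e * a\<^sup>2 + b\<^sup>2 / e"
    using assms by (simp add: field_simps power2_eq_square)
  moreover have "0 \<le> \<bar>a\<bar> * \<bar>b\<bar>"
    by simp
  ultimately show ?thesis
    by linarith
qed

lemma nn_integral_le_lincomb:
  assumes "f \<in> borel_measurable M" "g \<in> borel_measurable M"
    and "\<And>x. x \<in> space M \<Longrightarrow> \<phi> x \<le> c * f x + d * g x"
  shows "integral\<^sup>N M \<phi> \<le> c * integral\<^sup>N M f + d * integral\<^sup>N M g"
proof -
  have "integral\<^sup>N M \<phi> \<le> (\<integral>\<^sup>+ x. c * f x + d * g x \<partial>M)"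
    using assms(3) by (rule nn_integral_mono)
  also have "\<dots> = c * integral\<^sup>N M f + d * integral\<^sup>N M g"
    using assms(1,2) by (simp add: nn_integral_add nn_integral_cmult)
  finally show ?thesis .
qed

definition txv_integral :: "real \<Rightarrow> (real \<Rightarrow> phase_fun) \<Rightarrow> ennreal" where
  "txv_integral T F = (\<integral>\<^sup>+ t\<in>{0..T}. (\<integral>\<^sup>+ x. (\<integral>\<^sup>+ v. ennreal (F t x v) \<partial>lborel) \<partial>lborel) \<partial>lborel)"

lemma phase_measurable_partial_integrals:
  assumes "phase_measurable F"
  shows "(\<lambda>v. ennreal (F t x v)) \<in> borel_measurable lborel"
    and "(\<lambda>x. \<integral>\<^sup>+ v. ennreal (F t x v) \<partial>lborel) \<in> borel_measurable lborel"
    and "(\<lambda>t. \<integral>\<^sup>+ x. \<integral>\<^sup>+ v. ennreal (F t x v) \<partial>lborel \<partial>lborel) \<in> borel_measurable lborel"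
proof -
  have F: "(\<lambda>(q, v). ennreal (F (fst q) (snd q) v)) \<in> borel_measurable txv_measure"
    using assms by (simp add: phase_measurable_def case_prod_beta')
  have "(\<lambda>v. ((t, x), v)) \<in> lborel \<rightarrow>\<^sub>M txv_measure"
    by measurable
  from measurable_compose[OF this F] show "(\<lambda>v. ennreal (F t x v)) \<in> borel_measurable lborel"
    by simp
  have Fv: "(\<lambda>(t, x). \<integral>\<^sup>+ v. ennreal (F t x v) \<partial>lborel) \<in> borel_measurable (lborel \<Otimes>\<^sub>M lborel)"
    using lborel.borel_measurable_nn_integral[OF F] by (simp add: case_prod_beta')
  have "(\<lambda>x. (t, x)) \<in> lborel \<rightarrow>\<^sub>M lborel \<Otimes>\<^sub>M lborel"
    by measurable
  from measurable_compose[OF this Fv]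
  show "(\<lambda>x. \<integral>\<^sup>+ v. ennreal (F t x v) \<partial>lborel) \<in> borel_measurable lborel"
    by simp
  from lborel.borel_measurable_nn_integral[OF Fv]
  show "(\<lambda>t. \<integral>\<^sup>+ x. \<integral>\<^sup>+ v. ennreal (F t x v) \<partial>lborel \<partial>lborel) \<in> borel_measurable lborel" .
qed

lemma txv_integral_le_lincomb:
  assumes A: "phase_measurable A" and B: "phase_measurable B"
    and le: "\<And>t x v. t \<in> {0..T} \<Longrightarrow> \<Phi> t x v \<le> c * A t x v + d * B t x v"
    and "\<And>t x v. 0 \<le> A t x v" "\<And>t x v. 0 \<le> B t x v" "0 \<le> c" "0 \<le> d"
  shows "txv_integral T \<Phi> \<le> ennreal c * txv_integral T A + ennreal d * txv_integral T B"
proof -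
  let ?I = "\<lambda>F t. \<integral>\<^sup>+ x. \<integral>\<^sup>+ v. ennreal (F t x v) \<partial>lborel \<partial>lborel"
  have inner: "?I \<Phi> t \<le> ennreal c * ?I A t + ennreal d * ?I B t" if "t \<in> {0..T}" for t
  proof (rule nn_integral_le_lincomb)
    fix x
    show "(\<integral>\<^sup>+ v. ennreal (\<Phi> t x v) \<partial>lborel)
        \<le> ennreal c * (\<integral>\<^sup>+ v. ennreal (A t x v) \<partial>lborel) + ennreal d * (\<integral>\<^sup>+ v. ennreal (B t x v) \<partial>lborel)"
    proof (rule nn_integral_le_lincomb)
      fix v
      have "ennreal (\<Phi> t x v) \<le> ennreal (c * A t x v + d * B t x v)"
        using le[OF that] by (rule ennreal_leI)
      then show "ennreal (\<Phi> t x v) \<le> ennreal c * ennreal (A t x v) + ennreal d * ennreal (B t x v)"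
        using assms(4-7) by (simp add: ennreal_plus ennreal_mult)
    qed (intro phase_measurable_partial_integrals A B)+
  qed (intro phase_measurable_partial_integrals A B)+
  have "txv_integral T \<Phi> \<le> ennreal c * (\<integral>\<^sup>+ t. ?I A t * indicator {0..T} t \<partial>lborel)
      + ennreal d * (\<integral>\<^sup>+ t. ?I B t * indicator {0..T} t \<partial>lborel)"
    unfolding txv_integral_def
  proof (rule nn_integral_le_lincomb)
    fix t
    show "?I \<Phi> t * indicator {0..T} t
        \<le> ennreal c * (?I A t * indicator {0..T} t) + ennreal d * (?I B t * indicator {0..T} t)"
      using inner[of t] by (cases "t \<in> {0..T}") (simp_all add: distrib_left mult.assoc)
  qed (intro borel_measurable_times_ennreal borel_measurable_indicator phase_measurable_partial_integrals A B;
       simp)+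
  then show ?thesis
    by (simp add: txv_integral_def)
qed

lemma wL2sq_eq_txv_integral:
  "wL2sq \<delta> K \<alpha> \<beta> \<sigma> T =
    txv_integral T (\<lambda>t x v. ((1 + t) powr (- 1/2 - \<delta>/2) * Wt t \<alpha> \<beta> \<sigma> x v * Dop t \<alpha> \<beta> \<sigma> (K t) x v)\<^sup>2)"
  by (simp add: wL2sq_def L2sq_def txv_integral_def)

lemma T2term_eq_sum_txv_integral:
  "T2term \<delta> K \<alpha> \<beta> \<sigma> T = (\<Sum>(\<beta>', \<sigma>') \<in> lower_pairs \<beta> \<sigma>. txv_integral T (\<lambda>t x v.
     (1 + t) powr (-(1 + \<delta>)) * (Wt t \<alpha> \<beta> \<sigma> x v)\<^sup>2 *
       \<bar>Dop t \<alpha> \<beta> \<sigma> (K t) x v\<bar> * \<bar>Dop t \<alpha> \<beta>' \<sigma>' (K t) x v\<bar>))"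
  by (simp add: T2term_def txv_integral_def)

lemma phase_measurable_weighted_square:
  assumes "regular_family K"
  shows "phase_measurable (\<lambda>t x v. ((1 + t) powr (- 1/2 - \<delta>/2) * Wt t \<alpha> \<beta> \<sigma> x v * Dop t \<alpha> \<beta> \<sigma> (K t) x v)\<^sup>2)"
proof -
  have "phase_measurable (\<lambda>t. Dop t \<alpha> \<beta> \<sigma> (K t))"
    using regular_family_Dop[OF assms] by (simp add: regular_family_def)
  then show ?thesis
    unfolding phase_measurable_def Wt_def jbr_def by measurable
qed

text \<open>Young's inequality, together with the fact that the weight of the lower-order
  derivative is the larger one.\<close>
lemma T2_pair_le:
  assumes K: "regular_family K" and "msize \<beta>' \<le> msize \<beta>" "msize \<sigma>' \<le> msize \<sigma>" and e: "0 < e"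
  shows "txv_integral T (\<lambda>t x v. (1 + t) powr (-(1 + \<delta>)) * (Wt t \<alpha> \<beta> \<sigma> x v)\<^sup>2 *
       \<bar>Dop t \<alpha> \<beta> \<sigma> (K t) x v\<bar> * \<bar>Dop t \<alpha> \<beta>' \<sigma>' (K t) x v\<bar>)
    \<le> ennreal e * wL2sq \<delta> K \<alpha> \<beta> \<sigma> T + ennreal (1 / e) * wL2sq \<delta> K \<alpha> \<beta>' \<sigma>' T"
  unfolding wL2sq_eq_txv_integral
proof (rule txv_integral_le_lincomb[OF phase_measurable_weighted_square[OF K] phase_measurable_weighted_square[OF K]])
  fix t x v assume "t \<in> {0..T}"
  define s where "s = (1 + t) powr (- 1/2 - \<delta>/2)"
  define a where "a = Dop t \<alpha> \<beta> \<sigma> (K t) x v"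
  define b where "b = Dop t \<alpha> \<beta>' \<sigma>' (K t) x v"
  define W where "W = Wt t \<alpha> \<beta> \<sigma> x v"
  define W' where "W' = Wt t \<alpha> \<beta>' \<sigma>' x v"
  have s2: "(1 + t) powr (-(1 + \<delta>)) = s\<^sup>2"
    unfolding s_def power2_eq_square powr_add[symmetric] by simp
  have W: "0 \<le> W" "W \<le> W'"
    unfolding W_def W'_def using Wt_nonneg Wt_antimono assms(2,3) by auto
  have "(1 + t) powr (-(1 + \<delta>)) * W\<^sup>2 * \<bar>a\<bar> * \<bar>b\<bar> = (s * W)\<^sup>2 * (\<bar>a\<bar> * \<bar>b\<bar>)"
    unfolding s2 by (simp add: power_mult_distrib)
  also have "\<dots> \<le> (s * W)\<^sup>2 * (e * a\<^sup>2 + b\<^sup>2 / e)"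
    by (intro mult_left_mono abs_mult_le_young e) simp
  also have "\<dots> \<le> e * (s * W * a)\<^sup>2 + 1 / e * (s * W' * b)\<^sup>2"
    using power_mono[OF W(2,1), of 2] e
    by (simp add: power_mult_distrib algebra_simps divide_inverse mult_right_mono)
  finally show "(1 + t) powr (-(1 + \<delta>)) * W\<^sup>2 * \<bar>a\<bar> * \<bar>b\<bar>
      \<le> e * (s * W * a)\<^sup>2 + 1 / e * (s * W' * b)\<^sup>2" .
qed (use e in auto)

lemma mindex_le_msize: "\<beta> i \<le> msize \<beta>"
  unfolding msize_def by (rule member_le_sum) simp_all

lemma finite_msize_le: "finite {\<beta> :: mindex. msize \<beta> \<le> n}"
proof (rule finite_subset)
  show "{\<beta> :: mindex. msize \<beta> \<le> n} \<subseteq> Pi\<^sub>E UNIV (\<lambda>_. {..n})"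
    by (auto simp: PiE_UNIV_domain intro: order_trans[OF mindex_le_msize])
qed (simp add: finite_PiE)

lemma T2term_le:
  assumes K: "regular_family K" and e: "0 < e"
  shows "T2term \<delta> K \<alpha> \<beta> \<sigma> T \<le> ennreal (real (card (lower_pairs \<beta> \<sigma>)) * e) * wL2sq \<delta> K \<alpha> \<beta> \<sigma> T
    + ennreal (1 / e) * (\<Sum>(\<beta>', \<sigma>') \<in> lower_pairs \<beta> \<sigma>. wL2sq \<delta> K \<alpha> \<beta>' \<sigma>' T)"
proof -
  let ?W = "wL2sq \<delta> K \<alpha> \<beta> \<sigma> T"
  have "T2term \<delta> K \<alpha> \<beta> \<sigma> T
      \<le> (\<Sum>(\<beta>', \<sigma>') \<in> lower_pairs \<beta> \<sigma>. ennreal e * ?W + ennreal (1 / e) * wL2sq \<delta> K \<alpha> \<beta>' \<sigma>' T)"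
    unfolding T2term_eq_sum_txv_integral
    by (intro sum_mono) (auto simp: lower_pairs_def simp del: minus_add_distrib intro!: T2_pair_le K e)
  also have "\<dots> = of_nat (card (lower_pairs \<beta> \<sigma>)) * (ennreal e * ?W)
      + ennreal (1 / e) * (\<Sum>(\<beta>', \<sigma>') \<in> lower_pairs \<beta> \<sigma>. wL2sq \<delta> K \<alpha> \<beta>' \<sigma>' T)"
    by (simp add: sum.distrib sum_distrib_left case_prod_beta)
  also have "of_nat (card (lower_pairs \<beta> \<sigma>)) * (ennreal e * ?W)
      = ennreal (real (card (lower_pairs \<beta> \<sigma>)) * e) * ?W"
    using e by (simp add: ennreal_of_nat_eq_real_of_nat ennreal_mult mult.assoc)
  finally show ?thesis .
qed

definition lower_order_constant :: "real \<Rightarrow> real" where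
  "lower_order_constant \<eta> = card ({\<beta> :: mindex. msize \<beta> \<le> 10} \<times> {\<sigma> :: mindex. msize \<sigma> \<le> 10}) / \<eta>"

lemma card_small_mindex_pairs_pos:
  "0 < card ({\<beta> :: mindex. msize \<beta> \<le> 10} \<times> {\<sigma> :: mindex. msize \<sigma> \<le> 10})"
proof -
  have "(\<lambda>_. 0) \<in> {\<beta> :: mindex. msize \<beta> \<le> 10}"
    by (simp add: msize_def)
  then show ?thesis
    using finite_msize_le by (auto simp: card_gt_0_iff)
qed

lemma lower_order_constant_pos: "0 < \<eta> \<Longrightarrow> 0 < lower_order_constant \<eta>"
  using card_small_mindex_pairs_pos by (simp add: lower_order_constant_def)

lemma T2term_bound:
  assumes "0 < \<eta>" and K: "regular_family K" and size: "msize \<alpha> + msize \<beta> + msize \<sigma> \<le> 10"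
  shows "T2term \<delta> K \<alpha> \<beta> \<sigma> T \<le> ennreal \<eta> * wL2sq \<delta> K \<alpha> \<beta> \<sigma> T
    + ennreal (lower_order_constant \<eta>) * (\<Sum>(\<beta>', \<sigma>') \<in> lower_pairs \<beta> \<sigma>. wL2sq \<delta> K \<alpha> \<beta>' \<sigma>' T)"
proof -
  define M where "M = {\<beta> :: mindex. msize \<beta> \<le> 10}"
  define e where "e = \<eta> / card (M \<times> M)"
  have N: "0 < card (M \<times> M)"
    using card_small_mindex_pairs_pos by (simp add: M_def)
  have e: "0 < e" and C: "1 / e = lower_order_constant \<eta>"
    using \<open>0 < \<eta>\<close> N by (simp_all add: e_def lower_order_constant_def M_def)
  have "lower_pairs \<beta> \<sigma> \<subseteq> M \<times> M"
    using size by (auto simp: lower_pairs_def M_def)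
  then have "card (lower_pairs \<beta> \<sigma>) \<le> card (M \<times> M)"
    by (intro card_mono) (simp_all add: M_def finite_msize_le)
  then have "real (card (lower_pairs \<beta> \<sigma>)) * e \<le> \<eta>"
    using e N by (simp add: e_def field_simps)
  then have "ennreal (real (card (lower_pairs \<beta> \<sigma>)) * e) * wL2sq \<delta> K \<alpha> \<beta> \<sigma> T
      \<le> ennreal \<eta> * wL2sq \<delta> K \<alpha> \<beta> \<sigma> T"
    by (intro mult_right_mono ennreal_leI) simp_all
  then show ?thesis
    using T2term_le[OF K e, of \<delta> \<alpha> \<beta> \<sigma> T] unfolding C by (meson add_right_mono order_trans)
qed

lemma T2term_gfun_bound:
  assumes "0 < \<eta>" and boot: "bootstrap_setting d0 \<gamma> \<delta> \<epsilon> Tb fini f"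
    and size: "msize \<alpha> + msize \<beta> + msize \<sigma> \<le> 10" and T: "0 \<le> T" "T < Tb"
  shows "T2term \<delta> (gfun d0 \<delta> f) \<alpha> \<beta> \<sigma> T \<le> ennreal \<eta> * wL2sq \<delta> (gfun d0 \<delta> f) \<alpha> \<beta> \<sigma> T
    + ennreal (lower_order_constant \<eta>) *
      (\<Sum>(\<beta>', \<sigma>') \<in> lower_pairs \<beta> \<sigma>. wL2sq \<delta> (gfun d0 \<delta> f) \<alpha> \<beta>' \<sigma>' T)"
proof -
  define K where "K t x v = (if 0 \<le> t \<and> t < Tb then gfun d0 \<delta> f t x v else 0)" for t x v
  have "regular_family K"
    using boot unfolding K_def bootstrap_setting_def by (blast intro: landau_solution_regular_extension)
  moreover have "gfun d0 \<delta> f t = K t" if "t \<in> {0..T}" for t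
    using that T by (auto simp: K_def fun_eq_iff)
  then have "T2term \<delta> (gfun d0 \<delta> f) \<alpha>' \<beta>' \<sigma>' T = T2term \<delta> K \<alpha>' \<beta>' \<sigma>' T"
    "wL2sq \<delta> (gfun d0 \<delta> f) \<alpha>' \<beta>' \<sigma>' T = wL2sq \<delta> K \<alpha>' \<beta>' \<sigma>' T" for \<alpha>' \<beta>' \<sigma>'
    unfolding T2term_def wL2sq_def by (auto intro!: sum.cong nn_integral_cong simp: indicator_def)
  ultimately show ?thesis
    using T2term_bound[OF \<open>0 < \<eta>\<close> _ size] by simp
qed

theorem proposition7p3:
  fixes d0 \<gamma> :: real
  assumes "0 < d0" and "0 \<le> \<gamma>" and "\<gamma> < 1"
  shows "\<exists>\<epsilon>0>0. \<forall>\<eta>>0. \<exists>C>0. \<forall>\<delta> \<epsilon> Tb fini f \<alpha> \<beta> \<sigma> T.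
     bootstrap_setting d0 \<gamma> \<delta> \<epsilon> Tb fini f \<and> \<epsilon> \<le> \<epsilon>0 \<and>
     msize \<alpha> + msize \<beta> + msize \<sigma> \<le> 10 \<and> 0 \<le> T \<and> T < Tb \<longrightarrow>
     T2term \<delta> (gfun d0 \<delta> f) \<alpha> \<beta> \<sigma> T
       \<le> ennreal \<eta> * wL2sq \<delta> (gfun d0 \<delta> f) \<alpha> \<beta> \<sigma> T
         + ennreal C * (\<Sum>(\<beta>',\<sigma>') \<in> lower_pairs \<beta> \<sigma>. wL2sq \<delta> (gfun d0 \<delta> f) \<alpha> \<beta>' \<sigma>' T)"
  using T2term_gfun_bound lower_order_constant_pos by (intro exI[of _ 1]) (simp, meson)

end
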